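(* Let $m\ge 2$ and $1\le i<m$. For generic complex $u_1,\dots,u_m$, and in any representation of the twisted Yangian $Y^\pm(\mathfrak{gl}_N)$ in which the series $s_{ij}(u)$ act as rational operator-valued functions of $u$ (so they can be evaluated at generic complex $u$), the level-$n$ creation operator satisfies $$\mathrm{B}^{(n)}(u_1,\dots,u_m)=\mathrm{B}^{(n)}(u_1,\dots,u_{i-1},u_{i+1},u_i,u_{i+2},\dots,u_m)\,\check R^{(\hat n,\hat n)}_{\dot a_{i+1}\dot a_i}(u_i-u_{i+1})\,\check R^{(\hat n,\hat n)}_{\ddot a_{i+1}\ddot a_i}(u_{i+1}-u_i),$$ where on the right-hand side the labels $\dot a_1,\dots,\dot a_m,\ddot a_1,\dots,\ddot a_m$ are kept in their original positions (only the spectral parameters $u_i,u_{i+1}$ are interchanged), and the $\check R$-matrices act on the dual tensor factors by right multiplication.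
   Context: Fix $n\ge1$ and $N\in\{2n,2n+1\}$. The sign $\pm$ refers to the orthogonal ($+$) or symplectic ($-$) case; the symplectic case occurs only for $N=2n$. Put $\hat n:=n$ if $N=2n$ and $\hat n:=n+1$ if $N=2n+1$. For $k\in\mathbb N$ let $E^{(k)}_{ij}$ be the matrix units of $\mathrm{End}(\mathbb C^k)$, $E^{(k)}_i$ the standard basis of $\mathbb C^k$, and $(E^{(k)}_i)^*$ the dual basis. Put $P^{(k,k)}=\sum_{i,j}E^{(k)}_{ij}\otimes E^{(k)}_{ji}$, $R^{(k,k)}(u)=I-u^{-1}P^{(k,k)}$, and $\check R^{(k,k)}_{ab}(u):=\frac{u}{u-1}P^{(k,k)}_{ab}R^{(k,k)}_{ab}(u)$; subscripts indicate the tensor factors on which an operator acts. Let $f^\pm(u,v):=\frac{u-v\pm1}{u-v}$. Twisted Yangian: fix $\rho\in\mathbb C$ and write $\tilde u:=-u-\rho$. $Y^\pm(\mathfrak{gl}_N)$ is generated by $s_{ij}[r]$, $1\le i,j\le N$, $r\ge1$; put $s_{ij}(u)=\delta_{ij}+\sum_{r\ge1}s_{ij}[r]u^{-r}$. Let $\alpha(i)=i$ for $i\le\hat n$ and $\alpha(i)=i+n-\hat n$ for $i>\hat n$, and $S(u):=\sum_{i,j=1}^{2\hat n}E^{(2\hat n)}_{ij}\otimes s_{\alpha(i)\alpha(j)}(u)$ (for $N=2n+1$ the middle row and column are doubled). Let $\theta_{ij}=\theta_i\theta_j$ with $\theta_i=1$ in the orthogonal case and $\theta_i=1$ for $i>n$,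 $\theta_i=-1$ for $i\le n$ in the symplectic case; let $\hat\omega(E^{(2\hat n)}_{ij})=\theta_{ij}E^{(2\hat n)}_{\bar j\bar i}$ with $\bar i=2\hat n-i+1$, $\hat S:=\hat\omega(S)$, $\hat R:=(\mathrm{id}\otimes\hat\omega)(R^{(2\hat n,2\hat n)})$. The defining relations are $R_{12}(u-v)S_1(u)\hat R_{12}(\tilde v-u)S_2(v)=S_2(v)\hat R_{12}(\tilde v-u)S_1(u)R_{12}(u-v)$ (with $R=R^{(2\hat n,2\hat n)}$) and $\hat S(\tilde u)=S(u)\pm\frac{S(u)-S(\tilde u)}{u-\tilde u}$. Write $S(u)$ in $\hat n\times\hat n$ blocks $\begin{pmatrix}A(u)&B(u)\\C(u)&D(u)\end{pmatrix}$, so $[B(u)]_{kl}=s_{\alpha(k),\alpha(\hat n+l)}(u)$. For labels $\dot a,\ddot a$ of copies $V_{\dot a},V_{\ddot a}$ of $\mathbb C^{\hat n}$ set $$\mathrm b_{\dot a\ddot a}(u):=\sum_{k,l\le\hat n}(E^{(\hat n)}_k)^*_{\dot a}\otimes(E^{(\hat n)}_l)^*_{\ddot a}\otimes[B(u)]_{\hat n-k+1,\,l}.$$ For labels $\dot a_1,\dots,\dot a_m,\ddot a_1,\dots,\ddot a_m$ the level-$n$ creation operator is $$\mathrm B^{(n)}(u_1,\dots,u_m):=\prod_{i=m}^{1}\Big(\mathrm b_{\dot a_i\ddot a_i}(u_i)\prod_{j=i+1}^{m}\frac{R^{(\hat n,\hat n)}_{\dot a_i\ddot a_j}(\tilde u_i-u_j)}{(f^-(\tilde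 u_i,u_j))^{\delta_{\hat n n}}}\Big),$$ the outer product taken with $i$ decreasing from left to right and the inner one with $j$ increasing from left to right; the $R$-matrices act on the dual vectors by right multiplication. It takes values in $\bigotimes_i(V_{\dot a_i})^*\otimes(V_{\ddot a_i})^*\otimes(\text{operators})$. *)

theory Defs
  imports Complex_Main
begin

text \<open>Indices of all matrices/vectors are 1-based natural numbers.  A matrix on
a twofold tensor product \<open>C^k \<otimes> C^k\<close> is stored as a 4-index array:
\<open>M x x' y y'\<close> is the coefficient of \<open>E_{x x'} \<otimes> E_{y y'}\<close>.\<close>

type_synonym 'a mat4 = "nat \<Rightarrow> nat \<Rightarrow> nat \<Rightarrow> nat \<Rightarrow> 'a"

text \<open>Complex unital algebra structure on an arbitrary ring: a unital ring
homomorphism from the complex numbers into the centre.\<close>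

definition is_cscalar :: "(complex \<Rightarrow> 'a::ring_1) \<Rightarrow> bool" where
  "is_cscalar sc \<longleftrightarrow> sc 1 = 1 \<and> (\<forall>a b. sc (a + b) = sc a + sc b)
     \<and> (\<forall>a b. sc (a * b) = sc a * sc b) \<and> (\<forall>c x. sc c * x = x * sc c)"

definition hatn :: "nat \<Rightarrow> nat \<Rightarrow> nat" where
  "hatn n N = (if N = 2 * n then n else n + 1)"

definition alpha :: "nat \<Rightarrow> nat \<Rightarrow> nat \<Rightarrow> nat" where
  "alpha n N i = (if i \<le> hatn n N then i else i + n - hatn n N)"

definition theta :: "bool \<Rightarrow> nat \<Rightarrow> nat \<Rightarrow> complex" where
  "theta orth n i = (if orth then 1 else if i \<le> n then -1 else 1)"

definition bar :: "nat \<Rightarrow> nat \<Rightarrow> nat" where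
  "bar K i = K - i + 1"

definition fminus :: "complex \<Rightarrow> complex \<Rightarrow> complex" where
  "fminus u v = (u - v - 1) / (u - v)"

definition Idmat4 :: "complex mat4" where
  "Idmat4 x x' y y' = (if x = x' \<and> y = y' then 1 else 0)"

definition Pmat :: "complex mat4" where
  "Pmat x x' y y' = (if x' = y \<and> y' = x then 1 else 0)"

definition Rmat :: "complex \<Rightarrow> complex mat4" where
  "Rmat w x x' y y' = Idmat4 x x' y y' - Pmat x x' y y' / w"

text \<open>product in \<open>End(C^k) \<otimes> End(C^k) (\<otimes> A)\<close>\<close>
definition mprod4 :: "nat \<Rightarrow> ('a::semiring_0) mat4 \<Rightarrow> 'a mat4 \<Rightarrow> 'a mat4" where
  "mprod4 k M M' x x' y y' = (\<Sum>p\<in>{1..k}. \<Sum>q\<in>{1..k}. M x p y q * M' p x' q y')"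

definition Rcheck :: "nat \<Rightarrow> complex \<Rightarrow> complex mat4" where
  "Rcheck k w x x' y y' = w / (w - 1) * mprod4 k Pmat (Rmat w) x x' y y'"

definition lift4 :: "(complex \<Rightarrow> 'a) \<Rightarrow> complex mat4 \<Rightarrow> 'a mat4" where
  "lift4 sc M x x' y y' = sc (M x x' y y')"

text \<open>\<open>s i j u\<close> is the operator by which \<open>s_ij(u)\<close> acts (indices \<open>1..N\<close>).
\<open>Smat\<close> is the \<open>2 hatn \<times> 2 hatn\<close> matrix \<open>S(u)\<close> with entries \<open>s_{alpha i, alpha j}(u)\<close>.\<close>

definition Smat :: "nat \<Rightarrow> nat \<Rightarrow> (nat \<Rightarrow> nat \<Rightarrow> complex \<Rightarrow> 'a) \<Rightarrow> complex \<Rightarrow> nat \<Rightarrow> nat \<Rightarrow> 'a" where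
  "Smat n N s u i j = s (alpha n N i) (alpha n N j) u"

text \<open>\<open>omega_hat(E_ij) = theta_ij E_{bar j, bar i}\<close> applied to an operator-valued matrix.\<close>
definition omega_hat :: "(complex \<Rightarrow> 'a::ring_1) \<Rightarrow> bool \<Rightarrow> nat \<Rightarrow> nat \<Rightarrow>
    (nat \<Rightarrow> nat \<Rightarrow> 'a) \<Rightarrow> nat \<Rightarrow> nat \<Rightarrow> 'a" where
  "omega_hat sc orth n K X k l =
     sc (theta orth n (bar K l) * theta orth n (bar K k)) * X (bar K l) (bar K k)"

definition id_omega_hat :: "bool \<Rightarrow> nat \<Rightarrow> nat \<Rightarrow> complex mat4 \<Rightarrow> complex mat4" where
  "id_omega_hat orth n K M x x' y y' =
     theta orth n (bar K y') * theta orth n (bar K y) * M x x' (bar K y') (bar K y)"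

definition S1 :: "(complex \<Rightarrow> 'a::ring_1) \<Rightarrow> (nat \<Rightarrow> nat \<Rightarrow> 'a) \<Rightarrow> 'a mat4" where
  "S1 sc X x x' y y' = (if y = y' then X x x' else 0)"

definition S2 :: "(complex \<Rightarrow> 'a::ring_1) \<Rightarrow> (nat \<Rightarrow> nat \<Rightarrow> 'a) \<Rightarrow> 'a mat4" where
  "S2 sc X x x' y y' = (if x = x' then X y y' else 0)"

definition ty_rel1 :: "(complex \<Rightarrow> 'a::ring_1) \<Rightarrow> (nat \<Rightarrow> nat \<Rightarrow> complex \<Rightarrow> 'a) \<Rightarrow>
    nat \<Rightarrow> nat \<Rightarrow> bool \<Rightarrow> complex \<Rightarrow> complex \<Rightarrow> complex \<Rightarrow> bool" where
  "ty_rel1 sc s n N orth \<rho> u v \<longleftrightarrow>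
    (let K = 2 * hatn n N;
         R = lift4 sc (Rmat (u - v));
         Rh = lift4 sc (id_omega_hat orth n K (Rmat ((- v - \<rho>) - u)));
         Su = S1 sc (Smat n N s u);
         Sv = S2 sc (Smat n N s v);
         L = mprod4 K (mprod4 K (mprod4 K R Su) Rh) Sv;
         Rt = mprod4 K (mprod4 K (mprod4 K Sv Rh) Su) R
     in \<forall>x\<in>{1..K}. \<forall>x'\<in>{1..K}. \<forall>y\<in>{1..K}. \<forall>y'\<in>{1..K}. L x x' y y' = Rt x x' y y')"

definition ty_rel2 :: "(complex \<Rightarrow> 'a::ring_1) \<Rightarrow> (nat \<Rightarrow> nat \<Rightarrow> complex \<Rightarrow> 'a) \<Rightarrow>
    nat \<Rightarrow> nat \<Rightarrow> bool \<Rightarrow> complex \<Rightarrow> complex \<Rightarrow> bool" where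
  "ty_rel2 sc s n N orth \<rho> u \<longleftrightarrow>
    (let K = 2 * hatn n N; ut = - u - \<rho>; sgn = (if orth then 1 else -1 :: complex)
     in \<forall>k\<in>{1..K}. \<forall>l\<in>{1..K}.
        omega_hat sc orth n K (Smat n N s ut) k l
          = Smat n N s u k l + sc (sgn / (u - ut)) * (Smat n N s u k l - Smat n N s ut k l))"

text \<open>A representation of \<open>Y^\<pm>(gl_N)\<close> in which the \<open>s_ij(u)\<close> act as
operator-valued functions of \<open>u\<close> satisfying the defining relations for generic
arguments: away from finitely many values of \<open>u\<close>, \<open>v\<close>, \<open>u - v\<close>, \<open>u + v\<close>
(this contains the pole set of the relations for rational \<open>s_ij(u)\<close>).\<close>
definition tw_yangian_rep :: "(complex \<Rightarrow> 'a::ring_1) \<Rightarrow> (nat \<Rightarrow> nat \<Rightarrow> complex \<Rightarrow> 'a) \<Rightarrow>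
    nat \<Rightarrow> nat \<Rightarrow> bool \<Rightarrow> complex \<Rightarrow> bool" where
  "tw_yangian_rep sc s n N orth \<rho> \<longleftrightarrow>
    (\<exists>E. finite E \<and> (\<forall>u v. u \<notin> E \<longrightarrow> v \<notin> E \<longrightarrow> u - v \<notin> E \<longrightarrow> u + v \<notin> E \<longrightarrow>
          ty_rel1 sc s n N orth \<rho> u v \<and> ty_rel2 sc s n N orth \<rho> u))"

text \<open>An element of \<open>\<Otimes>_p (V_{dot a_p})^* \<otimes> (V_{ddot a_p})^* \<otimes> (operators)\<close> is
stored as its coefficient function: for an index assignment \<open>\<kappa>\<close>, where
\<open>\<kappa> (False, p)\<close> is the index in the slot \<open>dot a_p\<close> and \<open>\<kappa> (True, p)\<close> the
index in the slot \<open>ddot a_p\<close>, \<open>T \<kappa>\<close> is the operator coefficient of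
\<open>\<Otimes>_p (E_{\<kappa>(False,p)})^* \<otimes> (E_{\<kappa>(True,p)})^*\<close>.\<close>

type_synonym 'a dten = "(bool \<times> nat \<Rightarrow> nat) \<Rightarrow> 'a"

text \<open>right multiplication by \<open>b_{dot a_p, ddot a_p}(w)\<close>, where
\<open>[B(w)]_{kl} = s_{alpha k, alpha (hatn + l)}(w)\<close>\<close>
definition bmul :: "nat \<Rightarrow> nat \<Rightarrow> (nat \<Rightarrow> nat \<Rightarrow> complex \<Rightarrow> 'a::ring_1) \<Rightarrow> 'a dten \<Rightarrow>
    complex \<Rightarrow> nat \<Rightarrow> 'a dten" where
  "bmul n N s T w p \<kappa> =
     T \<kappa> * s (alpha n N (hatn n N - \<kappa> (False, p) + 1)) (alpha n N (hatn n N + \<kappa> (True, p))) w"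

text \<open>right multiplication of the dual vectors by a matrix \<open>M\<close> acting on the
tensor factors in slots \<open>a\<close> (first factor) and \<open>c\<close> (second factor):
\<open>(\<xi> M)(v) = \<xi>(M v)\<close>.\<close>
definition ract :: "(complex \<Rightarrow> 'a::ring_1) \<Rightarrow> nat \<Rightarrow> complex mat4 \<Rightarrow> bool \<times> nat \<Rightarrow>
    bool \<times> nat \<Rightarrow> 'a dten \<Rightarrow> 'a dten" where
  "ract sc k M a c T \<kappa> =
     (\<Sum>x\<in>{1..k}. \<Sum>y\<in>{1..k}. sc (M x (\<kappa> a) y (\<kappa> c)) * T (\<kappa>(a := x, c := y)))"

definition Rfac :: "nat \<Rightarrow> nat \<Rightarrow> complex \<Rightarrow> complex \<Rightarrow> complex \<Rightarrow> complex mat4" where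
  "Rfac n N \<rho> ui uj x x' y y' =
     Rmat ((- ui - \<rho>) - uj) x x' y y' / (fminus (- ui - \<rho>) uj) ^ (if hatn n N = n then 1 else 0)"

text \<open>\<open>B^(n)(u_1..u_m) = \<Prod>_{i=m}^{1} (b_i(u_i) \<Prod>_{j=i+1}^{m} R_{dot a_i, ddot a_j}(...)/f^-(...))\<close>\<close>
definition creation :: "(complex \<Rightarrow> 'a::ring_1) \<Rightarrow> (nat \<Rightarrow> nat \<Rightarrow> complex \<Rightarrow> 'a) \<Rightarrow>
    nat \<Rightarrow> nat \<Rightarrow> complex \<Rightarrow> nat \<Rightarrow> (nat \<Rightarrow> complex) \<Rightarrow> 'a dten" where
  "creation sc s n N \<rho> m u =
     foldl (\<lambda>T i. foldl (\<lambda>T' j. ract sc (hatn n N) (Rfac n N \<rho> (u i) (u j)) (False, i) (True, j) T')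
                         (bmul n N s T (u i) i) [Suc i..<Suc m])
           (\<lambda>\<kappa>. 1) (rev [1..<Suc m])"

end

theory Submission
  imports Defs
begin

text \<open>On index assignments with values in \<open>{1..hatn}\<close>, every \<open>R\<close>-matrix factor of the
creation operator acts on coefficient functions as \<open>\<alpha> + \<beta> P\<close>, where \<open>P\<close> flips the indices in two
tensor slots, so the creation operator becomes a fold of \<open>b\<close>-multiplications and such swap operators.
The exchange operator (the product of the two \<open>Rcheck\<close>-matrices of the theorem) commutes with
\<open>b(u k)\<close> for \<open>k \<noteq> i, i + 1\<close>, and by the Yang--Baxter equation (a computation in the group algebra
of \<open>S\<^sub>3\<close> acting on three slots) it can be pushed through every \<open>R\<close>-factor linking \<open>b(u i)\<close> or
\<open>b(u (i + 1))\<close> to another \<open>b\<close>, interchanging \<open>u i\<close> and \<open>u (i + 1)\<close> on the way. What remains is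
\<open>b(u i) R b(u (i + 1))\<close>. Read off on the entries of the block \<open>B\<close>, the first defining relation of
the twisted Yangian is an exchange relation for these entries; since \<open>u i - u (i + 1) \<noteq> \<plusminus>1\<close> it
can be solved, and it expresses this product as the exchange operator applied to the product with
\<open>u i\<close> and \<open>u (i + 1)\<close> interchanged.\<close>

section \<open>Central scalars\<close>

locale cscalar =
  fixes sc :: "complex \<Rightarrow> 'a::ring_1"
  assumes is_cscalar: "is_cscalar sc"
begin

lemma sc_add: "sc (a + b) = sc a + sc b"
  using is_cscalar unfolding is_cscalar_def by blast

lemma sc_mult: "sc (a * b) = sc a * sc b"
  using is_cscalar unfolding is_cscalar_def by blast

lemma sc_one: "sc 1 = 1"
  using is_cscalar unfolding is_cscalar_def by blast

lemma sc_central: "sc c * x = x * sc c"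
  using is_cscalar unfolding is_cscalar_def by blast

lemma sc_zero: "sc 0 = 0"
  using sc_add[of 0 0] by simp

lemma sc_minus: "sc (- a) = - sc a"
  using sc_add[of a "- a"] sc_zero by (metis add.right_inverse neg_eq_iff_add_eq_0)

lemma sc_diff: "sc (a - b) = sc a - sc b"
  using sc_add[of a "- b"] sc_minus by simp

lemma sc_left_commute: "sc c * (sc d * x) = sc d * (sc c * x)"
  by (metis mult.assoc sc_mult mult.commute)

text \<open>Rewriting with \<open>sc_normalize\<close> moves all scalars to the front of each monomial and
merges them, so that identities in \<open>'a\<close> with central scalars become accessible to \<open>simp\<close>.\<close>

lemma sc_right_to_left: "NO_MATCH (sc e) x \<Longrightarrow> x * sc d = sc d * x"
  by (simp add: sc_central)

lemma sc_inner_to_left: "NO_MATCH (sc e) x \<Longrightarrow> x * (sc d * y) = sc d * (x * y)"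
  by (metis mult.assoc sc_central)

lemma sc_merge: "sc d * (sc e * y) = sc (d * e) * y" "sc d * sc e = sc (d * e)"
  by (simp_all add: sc_mult mult.assoc)

lemmas sc_normalize = sc_right_to_left sc_inner_to_left sc_merge sc_minus

end

section \<open>Swap operators and the Yang--Baxter equation\<close>

definition swap_slots :: "bool \<times> nat \<Rightarrow> bool \<times> nat \<Rightarrow> (bool \<times> nat \<Rightarrow> nat) \<Rightarrow> bool \<times> nat \<Rightarrow> nat" where
  "swap_slots a c \<kappa> = \<kappa>(a := \<kappa> c, c := \<kappa> a)"

lemma swap_slots_apply: "swap_slots a c \<kappa> d = (if d = c then \<kappa> a else if d = a then \<kappa> c else \<kappa> d)"
  by (simp add: swap_slots_def)

lemma swap_slots_commute: "swap_slots a c = swap_slots c a"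
  by (auto simp: swap_slots_def fun_eq_iff)

lemma swap_slots_swap_slots [simp]: "swap_slots a c (swap_slots a c \<kappa>) = \<kappa>"
  by (auto simp: swap_slots_def fun_eq_iff)

text \<open>\<open>swap_op sc \<alpha> \<beta> a c\<close> is right multiplication of the dual vectors by
\<open>\<alpha> + \<beta> P\<close>, with \<open>P\<close> the flip of the tensor factors in the slots \<open>a\<close> and \<open>c\<close>. In these terms
\<open>R_op sc g w\<close> is \<open>g R(w)\<close> and \<open>Rcheck_op sc w\<close> is \<open>w/(w - 1) P R(w)\<close>.\<close>

definition swap_op :: "(complex \<Rightarrow> 'a::ring_1) \<Rightarrow> complex \<Rightarrow> complex \<Rightarrow> bool \<times> nat \<Rightarrow> bool \<times> nat \<Rightarrow>
    'a dten \<Rightarrow> 'a dten" where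
  "swap_op sc \<alpha> \<beta> a c T = (\<lambda>\<kappa>. sc \<alpha> * T \<kappa> + sc \<beta> * T (swap_slots a c \<kappa>))"

definition R_op :: "(complex \<Rightarrow> 'a::ring_1) \<Rightarrow> complex \<Rightarrow> complex \<Rightarrow> bool \<times> nat \<Rightarrow> bool \<times> nat \<Rightarrow>
    'a dten \<Rightarrow> 'a dten" where
  "R_op sc g w = swap_op sc g (- g / w)"

definition Rcheck_op :: "(complex \<Rightarrow> 'a::ring_1) \<Rightarrow> complex \<Rightarrow> bool \<times> nat \<Rightarrow> bool \<times> nat \<Rightarrow>
    'a dten \<Rightarrow> 'a dten" where
  "Rcheck_op sc w = swap_op sc (- 1 / (w - 1)) (w / (w - 1))"

lemma swap_op_commute_slots: "swap_op sc \<alpha> \<beta> a c = swap_op sc \<alpha> \<beta> c a"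
  unfolding swap_op_def by (simp add: swap_slots_commute)

lemma Rcheck_op_commute_slots: "Rcheck_op sc w a c = Rcheck_op sc w c a"
  unfolding Rcheck_op_def by (rule swap_op_commute_slots)

context cscalar
begin

lemma swap_op_commute:
  assumes "a \<noteq> a'" "a \<noteq> c'" "c \<noteq> a'" "c \<noteq> c'"
  shows "swap_op sc \<alpha> \<beta> a c (swap_op sc \<alpha>' \<beta>' a' c' T) = swap_op sc \<alpha>' \<beta>' a' c' (swap_op sc \<alpha> \<beta> a c T)"
proof -
  have "swap_slots a' c' (swap_slots a c \<kappa>) = swap_slots a c (swap_slots a' c' \<kappa>)" for \<kappa>
    using assms by (auto simp: swap_slots_def fun_eq_iff)
  then show ?thesis
    unfolding swap_op_def by (intro ext) (simp add: distrib_left sc_left_commute algebra_simps)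
qed

text \<open>On three distinct slots the swap operators generate the group algebra of \<open>S\<^sub>3\<close>;
\<open>s3_comb\<close> is a general element of it, written in the basis of the six permutations.\<close>

definition s3_comb :: "bool \<times> nat \<Rightarrow> bool \<times> nat \<Rightarrow> bool \<times> nat \<Rightarrow>
    complex \<Rightarrow> complex \<Rightarrow> complex \<Rightarrow> complex \<Rightarrow> complex \<Rightarrow> complex \<Rightarrow> 'a dten \<Rightarrow> 'a dten" where
  "s3_comb a b c c0 c1 c2 c3 c4 c5 T = (\<lambda>\<kappa>. sc c0 * T \<kappa> + sc c1 * T (swap_slots a b \<kappa>)
     + sc c2 * T (swap_slots b c \<kappa>) + sc c3 * T (swap_slots a c \<kappa>)
     + sc c4 * T (swap_slots a b (swap_slots b c \<kappa>)) + sc c5 * T (swap_slots b c (swap_slots a b \<kappa>)))"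

lemma s3_comb_unit: "T = s3_comb a b c 1 0 0 0 0 0 T"
  by (simp add: s3_comb_def sc_one sc_zero)

lemma s3_comb_cong:
  "c0 = d0 \<Longrightarrow> c1 = d1 \<Longrightarrow> c2 = d2 \<Longrightarrow> c3 = d3 \<Longrightarrow> c4 = d4 \<Longrightarrow> c5 = d5 \<Longrightarrow>
   s3_comb a b c c0 c1 c2 c3 c4 c5 T = s3_comb a b c d0 d1 d2 d3 d4 d5 T"
  by simp

context
  fixes a b c :: "bool \<times> nat"
  assumes distinct: "a \<noteq> b" "a \<noteq> c" "b \<noteq> c"
begin

lemma swap_op_s3_comb_ab:
  "swap_op sc \<alpha> \<beta> a b (s3_comb a b c c0 c1 c2 c3 c4 c5 T) =
   s3_comb a b c (\<alpha>*c0+\<beta>*c1) (\<alpha>*c1+\<beta>*c0) (\<alpha>*c2+\<beta>*c5) (\<alpha>*c3+\<beta>*c4) (\<alpha>*c4+\<beta>*c3) (\<alpha>*c5+\<beta>*c2) T"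
proof -
  have "swap_slots a b (swap_slots a b k) = k"
    "swap_slots a c (swap_slots a b k) = swap_slots a b (swap_slots b c k)"
    "swap_slots a b (swap_slots b c (swap_slots a b k)) = swap_slots a c k"
    "swap_slots b c (swap_slots a b (swap_slots a b k)) = swap_slots b c k" for k
    using distinct by (auto simp: swap_slots_def fun_eq_iff)
  then show ?thesis
    unfolding s3_comb_def swap_op_def
    by (intro ext) (simp add: sc_add sc_mult distrib_left distrib_right mult.assoc add_ac)
qed

lemma swap_op_s3_comb_ac:
  "swap_op sc \<alpha> \<beta> a c (s3_comb a b c c0 c1 c2 c3 c4 c5 T) =
   s3_comb a b c (\<alpha>*c0+\<beta>*c3) (\<alpha>*c1+\<beta>*c5) (\<alpha>*c2+\<beta>*c4) (\<alpha>*c3+\<beta>*c0) (\<alpha>*c4+\<beta>*c2) (\<alpha>*c5+\<beta>*c1) T"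
proof -
  have "swap_slots a b (swap_slots a c k) = swap_slots b c (swap_slots a b k)"
    "swap_slots b c (swap_slots a c k) = swap_slots a b (swap_slots b c k)"
    "swap_slots a c (swap_slots a c k) = k"
    "swap_slots a b (swap_slots b c (swap_slots a c k)) = swap_slots b c k"
    "swap_slots b c (swap_slots a b (swap_slots a c k)) = swap_slots a b k" for k
    using distinct by (auto simp: swap_slots_def fun_eq_iff)
  then show ?thesis
    unfolding s3_comb_def swap_op_def
    by (intro ext) (simp add: sc_add sc_mult distrib_left distrib_right mult.assoc add_ac)
qed

lemma swap_op_s3_comb_bc:
  "swap_op sc \<alpha> \<beta> b c (s3_comb a b c c0 c1 c2 c3 c4 c5 T) =
   s3_comb a b c (\<alpha>*c0+\<beta>*c2) (\<alpha>*c1+\<beta>*c4) (\<alpha>*c2+\<beta>*c0) (\<alpha>*c3+\<beta>*c5) (\<alpha>*c4+\<beta>*c1) (\<alpha>*c5+\<beta>*c3) T"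
proof -
  have "swap_slots b c (swap_slots b c k) = k"
    "swap_slots a c (swap_slots b c k) = swap_slots b c (swap_slots a b k)"
    "swap_slots a b (swap_slots b c (swap_slots b c k)) = swap_slots a b k"
    "swap_slots b c (swap_slots a b (swap_slots b c k)) = swap_slots a c k" for k
    using distinct by (auto simp: swap_slots_def fun_eq_iff)
  then show ?thesis
    unfolding s3_comb_def swap_op_def
    by (intro ext) (simp add: sc_add sc_mult distrib_left distrib_right mult.assoc add_ac)
qed

lemmas swap_op_s3_comb = swap_op_s3_comb_ab swap_op_s3_comb_ac swap_op_s3_comb_bc

lemma yang_baxter_Rcheck_first:
  assumes "w1 \<noteq> 0" "w2 \<noteq> 0" "w2 - w1 \<noteq> 1"
  shows "R_op sc g1 w1 a c (R_op sc g2 w2 a b (Rcheck_op sc (w2 - w1) b c T))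
       = Rcheck_op sc (w2 - w1) b c (R_op sc g2 w2 a c (R_op sc g1 w1 a b T))"
  unfolding R_op_def Rcheck_op_def
  apply (subst (1 2) s3_comb_unit[of T a b c])
  apply (simp only: swap_op_s3_comb)
  apply (rule s3_comb_cong)
  using assms by (simp_all add: divide_simps) (simp_all add: algebra_simps)

lemma yang_baxter_Rcheck_last:
  assumes "w1 \<noteq> 0" "w2 \<noteq> 0" "w1 - w2 \<noteq> 1"
  shows "Rcheck_op sc (w1 - w2) a b (R_op sc g1 w1 a c (R_op sc g2 w2 b c T))
       = R_op sc g2 w2 a c (R_op sc g1 w1 b c (Rcheck_op sc (w1 - w2) a b T))"
  unfolding R_op_def Rcheck_op_def
  apply (subst (1 2) s3_comb_unit[of T a b c])
  apply (simp only: swap_op_s3_comb)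
  apply (rule s3_comb_cong)
  using assms by (simp_all add: divide_simps) (simp_all add: algebra_simps)

end

end

section \<open>The reflection relation on the block \<open>B\<close>\<close>

lemma mult_if_zero_right: "(a::'a::semiring_0) * (if P then b else 0) = (if P then a * b else 0)"
  by simp

lemma mult_if_zero_left: "(if P then b else 0) * (a::'a::semiring_0) = (if P then b * a else 0)"
  by simp

lemma if_conj_zero: "(if P \<and> Q then b else 0) = (if P then if Q then b else 0 else (0::'a::zero))"
  by simp

lemma sum_if_zero: "(\<Sum>q\<in>S. if P then f q else 0) = (if P then \<Sum>q\<in>S. f q else (0::'a::comm_monoid_add))"
  by simp

lemma theta_mult_self [simp]: "theta orth n j * theta orth n j = 1"
  by (simp add: theta_def)

lemma bar_inj: "y \<in> {1..K} \<Longrightarrow> q \<in> {1..K} \<Longrightarrow> bar K y = bar K q \<longleftrightarrow> y = q"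
  by (auto simp: bar_def)

lemma bar_range: "q \<in> {1..K} \<Longrightarrow> bar K q \<in> {1..K}"
  by (auto simp: bar_def)

lemma bar_bar [simp]: "q \<in> {1..K} \<Longrightarrow> bar K (bar K q) = q"
  by (auto simp: bar_def)

lemma eq_bar_iff: "x \<in> {1..K} \<Longrightarrow> q \<in> {1..K} \<Longrightarrow> x = bar K q \<longleftrightarrow> q = bar K x"
  by (auto simp: bar_def)

lemma theta_same_half:
  assumes "orth \<or> hatn n N = n" "j \<le> hatn n N \<longleftrightarrow> k \<le> hatn n N"
  shows "theta orth n j * theta orth n k = 1"
  using assms by (auto simp: theta_def)

definition b_coeff :: "nat \<Rightarrow> nat \<Rightarrow> (nat \<Rightarrow> nat \<Rightarrow> complex \<Rightarrow> 'a) \<Rightarrow> complex \<Rightarrow> nat \<Rightarrow> nat \<Rightarrow> 'a" where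
  "b_coeff n N s w k l = Smat n N s w (hatn n N - k + 1) (hatn n N + l)"

lemma bmul_b_coeff: "bmul n N s T w p \<kappa> = T \<kappa> * b_coeff n N s w (\<kappa> (False, p)) (\<kappa> (True, p))"
  by (simp add: bmul_def b_coeff_def Smat_def)

context cscalar
begin

lemma sc_if_zero: "sc (if A then c else 0) = (if A then sc c else 0)"
  by (simp add: sc_zero)

lemma sc_if_zero_divide: "sc ((if A then 1 else 0) / a) = (if A then sc (1/a) else 0)"
  by (simp add: sc_zero)

lemma mprod4_S1_right:
  "y' \<in> {1..K} \<Longrightarrow> mprod4 K M (S1 sc X) x x' y y' = (\<Sum>p\<in>{1..K}. M x p y y' * X p x')"
  unfolding mprod4_def S1_def by (simp add: mult_if_zero_right sum.delta')

lemma mprod4_S2_right: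
  "x' \<in> {1..K} \<Longrightarrow> mprod4 K M (S2 sc X) x x' y y' = (\<Sum>q\<in>{1..K}. M x x' y q * X q y')"
  unfolding mprod4_def S2_def by (simp add: mult_if_zero_right sum_if_zero sum.delta cong: if_cong)

lemma mprod4_Rmat_right:
  assumes "x' \<in> {1..K}" "y' \<in> {1..K}"
  shows "mprod4 K M (lift4 sc (Rmat a)) x x' y y' = M x x' y y' - M x y' y x' * sc (1/a)"
proof -
  have "mprod4 K M (lift4 sc (Rmat a)) x x' y y' =
     (\<Sum>p\<in>{1..K}. \<Sum>q\<in>{1..K}. (if p = x' \<and> q = y' then M x p y q else 0)
        - (if x' = q \<and> y' = p then M x p y q * sc (1/a) else 0))"
    unfolding mprod4_def lift4_def Rmat_def Idmat4_def Pmat_def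
    by (simp add: sc_diff sc_one sc_if_zero sc_if_zero_divide right_diff_distrib mult_if_zero_right
        cong: if_cong)
  also have "\<dots> = M x x' y y' - M x y' y x' * sc (1/a)"
    using assms by (simp add: sum_subtractf if_conj_zero sum_if_zero sum.delta sum.delta')
  finally show ?thesis .
qed

lemma mprod4_omega_Rmat_right:
  assumes "x' \<in> {1..K}" "y' \<in> {1..K}"
  shows "mprod4 K M (lift4 sc (id_omega_hat orth n K (Rmat w))) x x' y y' = M x x' y y'
   - (if x' = bar K y'
      then \<Sum>q\<in>{1..K}. M x (bar K q) y q * sc (theta orth n x' * theta orth n (bar K q) / w) else 0)"
proof -
  let ?G = "\<lambda>p q. M x p y q * sc (theta orth n x' * theta orth n (bar K q) / w)"
  have "mprod4 K M (lift4 sc (id_omega_hat orth n K (Rmat w))) x x' y y' =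
     (\<Sum>p\<in>{1..K}. \<Sum>q\<in>{1..K}. (if p = x' \<and> q = y' then M x p y q else 0)
        - (if x' = bar K y' then if p = bar K q then ?G p q else 0 else 0))"
    unfolding mprod4_def
  proof (intro sum.cong refl)
    fix p q assume q: "q \<in> {1..K}"
    show "M x p y q * lift4 sc (id_omega_hat orth n K (Rmat w)) p x' q y' =
      (if p = x' \<and> q = y' then M x p y q else 0) -
      (if x' = bar K y' then if p = bar K q then ?G p q else 0 else 0)"
      using bar_inj[OF assms(2) q]
      unfolding lift4_def id_omega_hat_def Rmat_def Idmat4_def Pmat_def
      by (cases "p = x'"; cases "q = y'"; cases "x' = bar K y'"; cases "p = bar K q";
          simp add: sc_one sc_zero sc_diff sc_minus right_diff_distrib eq_commute[of "bar K q"])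
  qed
  also have "\<dots> = M x x' y y' - (if x' = bar K y' then \<Sum>q\<in>{1..K}. ?G (bar K q) q else 0)"
  proof -
    have diagonal: "(\<Sum>p\<in>{1..K}. \<Sum>q\<in>{1..K}. if p = x' \<and> q = y' then M x p y q else 0) = M x x' y y'"
      using assms by (simp add: if_conj_zero sum_if_zero sum.delta cong: if_cong)
    have "(\<Sum>p\<in>{1..K}. \<Sum>q\<in>{1..K}. if p = bar K q then ?G p q else 0)
        = (\<Sum>q\<in>{1..K}. \<Sum>p\<in>{1..K}. if p = bar K q then ?G p q else 0)"
      by (rule sum.swap)
    also have "\<dots> = (\<Sum>q\<in>{1..K}. ?G (bar K q) q)"
      by (rule sum.cong) (auto simp: sum.delta bar_def)
    finally have antidiagonal:
      "(\<Sum>p\<in>{1..K}. \<Sum>q\<in>{1..K}. if p = bar K q then ?G p q else 0) = (\<Sum>q\<in>{1..K}. ?G (bar K q) q)" .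
    show ?thesis
      by (simp only: sum_subtractf diagonal sum_if_zero antidiagonal)
  qed
  finally show ?thesis .
qed

lemma Rmat_S1_entry:
  assumes "x \<in> {1..K}" "y \<in> {1..K}" "q \<in> {1..K}"
  shows "mprod4 K (lift4 sc (Rmat a)) (S1 sc X) x p y q
    = (if y = q then X x p else 0) - sc (1/a) * (if x = q then X y p else 0)"
  using assms
  by (simp add: mprod4_S1_right lift4_def Rmat_def Idmat4_def Pmat_def sc_diff sc_one sc_zero
      sc_if_zero sc_if_zero_divide left_diff_distrib sum_subtractf mult_if_zero_left if_conj_zero sum_if_zero sum.delta sum.delta'
      cong: if_cong)

lemma S2_omega_Rmat_entry:
  assumes "x \<in> {1..K}" "t \<in> {1..K}" "q \<in> {1..K}"
  shows "mprod4 K (S2 sc Y) (lift4 sc (id_omega_hat orth n K (Rmat w))) x t y q =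
    (if x = t then Y y q else 0)
    - (if t = bar K q then Y y (bar K x) * sc (theta orth n t * theta orth n x / w) else 0)"
proof -
  have "(\<Sum>q'\<in>{1..K}. S2 sc Y x (bar K q') y q' * sc (theta orth n t * theta orth n (bar K q') / w))
     = (\<Sum>q'\<in>{1..K}. if q' = bar K x then Y y q' * sc (theta orth n t * theta orth n (bar K q') / w) else 0)"
    by (intro sum.cong refl) (simp add: S2_def eq_bar_iff[OF assms(1)])
  also have "\<dots> = Y y (bar K x) * sc (theta orth n t * theta orth n x / w)"
    using assms bar_range[OF assms(1)] by (simp add: sum.delta')
  finally have sum_eq: "(\<Sum>q'\<in>{1..K}. S2 sc Y x (bar K q') y q' * sc (theta orth n t * theta orth n (bar K q') / w))
     = Y y (bar K x) * sc (theta orth n t * theta orth n x / w)" .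
  show ?thesis
    unfolding mprod4_omega_Rmat_right[OF assms(2,3)] sum_eq by (simp add: S2_def)
qed

lemma ty_rel1_lhs_entry:
  assumes h: "x \<in> {1..K}" "x' \<in> {1..K}" "y \<in> {1..K}" "y' \<in> {1..K}"
  shows "mprod4 K (mprod4 K (mprod4 K (lift4 sc (Rmat a)) (S1 sc X))
      (lift4 sc (id_omega_hat orth n K (Rmat w)))) (S2 sc Y) x x' y y' =
    (X x x' * Y y y' - sc (1/a) * X y x' * Y x y')
    - (X x (bar K y) * sc (theta orth n x' * theta orth n (bar K y) / w)
       - sc (1/a) * (X y (bar K x) * sc (theta orth n x' * theta orth n (bar K x) / w)))
      * Y (bar K x') y'"
proof -
  let ?RS = "mprod4 K (lift4 sc (Rmat a)) (S1 sc X)"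
  let ?C = "X x (bar K y) * sc (theta orth n x' * theta orth n (bar K y) / w)
       - sc (1/a) * (X y (bar K x) * sc (theta orth n x' * theta orth n (bar K x) / w))"
  have C: "(\<Sum>q\<in>{1..K}. ?RS x (bar K q) y q * sc (theta orth n x' * theta orth n (bar K q) / w)) = ?C"
  proof -
    have "(\<Sum>q\<in>{1..K}. ?RS x (bar K q) y q * sc (theta orth n x' * theta orth n (bar K q) / w))
      = (\<Sum>q\<in>{1..K}. (if y = q then X x (bar K q) * sc (theta orth n x' * theta orth n (bar K q) / w) else 0)
          - sc (1/a) * (if x = q then X y (bar K q) * sc (theta orth n x' * theta orth n (bar K q) / w) else 0))"
      using h by (intro sum.cong refl) (simp add: Rmat_S1_entry left_diff_distrib mult.assoc)
    also have "\<dots> = ?C"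
      using h by (simp add: sum_subtractf sum_distrib_left[symmetric] sum.delta)
    finally show ?thesis .
  qed
  have "mprod4 K (mprod4 K ?RS (lift4 sc (id_omega_hat orth n K (Rmat w)))) (S2 sc Y) x x' y y'
     = (\<Sum>r\<in>{1..K}. (?RS x x' y r - (if x' = bar K r then ?C else 0)) * Y r y')"
    unfolding mprod4_S2_right[OF h(2)]
    by (intro sum.cong refl) (simp only: mprod4_omega_Rmat_right[OF h(2)] C)
  also have "\<dots> = (\<Sum>r\<in>{1..K}. ((if y = r then X x x' * Y r y' else 0)
        - sc (1/a) * (if x = r then X y x' * Y r y' else 0)) - (if r = bar K x' then ?C * Y r y' else 0))"
    using h by (intro sum.cong refl) (auto simp: Rmat_S1_entry left_diff_distrib mult.assoc)
  also have "\<dots> = (X x x' * Y y y' - sc (1/a) * X y x' * Y x y') - ?C * Y (bar K x') y'"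
    using h bar_range[OF h(2)]
    by (simp add: sum_subtractf sum_distrib_left[symmetric] sum.delta sum.delta' mult.assoc)
  finally show ?thesis .
qed

lemma ty_rel1_rhs_entry:
  assumes h: "x \<in> {1..K}" "x' \<in> {1..K}" "y \<in> {1..K}" "y' \<in> {1..K}"
  shows "mprod4 K (mprod4 K (mprod4 K (S2 sc Y) (lift4 sc (id_omega_hat orth n K (Rmat w))))
      (S1 sc X)) (lift4 sc (Rmat a)) x x' y y' =
    (Y y y' * X x x' - Y y (bar K x) * sc (theta orth n (bar K y') * theta orth n x / w) * X (bar K y') x')
    - (Y y x' * X x y' - Y y (bar K x) * sc (theta orth n (bar K x') * theta orth n x / w) * X (bar K x') y')
      * sc (1/a)"
proof -
  let ?V = "mprod4 K (S2 sc Y) (lift4 sc (id_omega_hat orth n K (Rmat w)))"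
  have W: "mprod4 K ?V (S1 sc X) x p y q = Y y q * X x p
      - Y y (bar K x) * sc (theta orth n (bar K q) * theta orth n x / w) * X (bar K q) p"
    if q: "q \<in> {1..K}" for p q
  proof -
    have "mprod4 K ?V (S1 sc X) x p y q = (\<Sum>t\<in>{1..K}. ((if x = t then Y y q else 0)
       - (if t = bar K q then Y y (bar K x) * sc (theta orth n t * theta orth n x / w) else 0)) * X t p)"
      unfolding mprod4_S1_right[OF q]
      by (intro sum.cong refl) (simp only: S2_omega_Rmat_entry[OF h(1) _ q])
    also have "\<dots> = Y y q * X x p - Y y (bar K x) * sc (theta orth n (bar K q) * theta orth n x / w) * X (bar K q) p"
      using h bar_range[OF q]
      by (simp add: left_diff_distrib sum_subtractf mult_if_zero_left sum.delta sum.delta' cong: if_cong)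
    finally show ?thesis .
  qed
  show ?thesis
    unfolding mprod4_Rmat_right[OF h(2,4)] W[OF h(4)] W[OF h(2)] ..
qed

text \<open>The entry of the first defining relation at rows \<open>hatn - k + 1\<close> and columns \<open>hatn + l\<close>;
all \<open>\<theta>\<close>-factors cancel because \<open>\<theta>\<close> is constant on each half of the index range.\<close>

lemma b_coeff_exchange:
  assumes rel: "ty_rel1 sc s n N orth \<rho> u v" and half: "orth \<or> hatn n N = n"
    and k: "k1 \<in> {1..hatn n N}" "l1 \<in> {1..hatn n N}" "k2 \<in> {1..hatn n N}" "l2 \<in> {1..hatn n N}"
  defines "b \<equiv> b_coeff n N s" and "a \<equiv> u - v" and "c \<equiv> - v - \<rho> - u"
  shows "b u k1 l1 * b v k2 l2 - sc (1/a) * (b u k2 l1 * b v k1 l2)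
       - sc (1/c) * (b u k1 k2 * b v l1 l2) + sc (1/a * (1/c)) * (b u k2 k1 * b v l1 l2)
   = b v k2 l2 * b u k1 l1 - sc (1/c) * (b v k2 k1 * b u l2 l1)
       - sc (1/a) * (b v k2 l1 * b u k1 l2) + sc (1/a * (1/c)) * (b v k2 k1 * b u l1 l2)"
proof -
  define h where "h = hatn n N"
  define K where "K = 2 * h"
  define x where "x = h - k1 + 1"
  define y where "y = h - k2 + 1"
  define x' where "x' = h + l1"
  define y' where "y' = h + l2"
  have range: "x \<in> {1..K}" "x' \<in> {1..K}" "y \<in> {1..K}" "y' \<in> {1..K}"
    using k by (auto simp: x_def y_def x'_def y'_def K_def h_def)
  have bars: "bar K x = h + k1" "bar K y = h + k2" "bar K x' = h - l1 + 1" "bar K y' = h - l2 + 1"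
    using k by (auto simp: x_def y_def x'_def y'_def K_def h_def bar_def)
  have thetas: "theta orth n x' * theta orth n (bar K y) = 1" "theta orth n x' * theta orth n (bar K x) = 1"
    "theta orth n (bar K y') * theta orth n x = 1" "theta orth n (bar K x') * theta orth n x = 1"
    using k unfolding bars by (auto simp: x_def x'_def h_def intro!: theta_same_half[OF half])
  have "mprod4 K (mprod4 K (mprod4 K (lift4 sc (Rmat a)) (S1 sc (Smat n N s u)))
      (lift4 sc (id_omega_hat orth n K (Rmat c)))) (S2 sc (Smat n N s v)) x x' y y'
    = mprod4 K (mprod4 K (mprod4 K (S2 sc (Smat n N s v)) (lift4 sc (id_omega_hat orth n K (Rmat c))))
      (S1 sc (Smat n N s u))) (lift4 sc (Rmat a)) x x' y y'"
    using rel range unfolding ty_rel1_def Let_def K_def h_def a_def c_def by blast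
  then have "Smat n N s u x x' * Smat n N s v y y' - sc (1/a) * Smat n N s u y x' * Smat n N s v x y'
   - (Smat n N s u x (bar K y) * sc (1/c) - sc (1/a) * (Smat n N s u y (bar K x) * sc (1/c))) * Smat n N s v (bar K x') y'
   = (Smat n N s v y y' * Smat n N s u x x' - Smat n N s v y (bar K x) * sc (1/c) * Smat n N s u (bar K y') x')
   - (Smat n N s v y x' * Smat n N s u x y' - Smat n N s v y (bar K x) * sc (1/c) * Smat n N s u (bar K x') y') * sc (1/a)"
    unfolding ty_rel1_lhs_entry[OF range] ty_rel1_rhs_entry[OF range] thetas by simp
  from this[unfolded bars] show ?thesis
    by (simp add: b_def b_coeff_def x_def y_def x'_def y'_def h_def sc_normalize algebra_simps)
qed

end

section \<open>The creation operator as a product of swap operators\<close>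

lemma foldl_rel:
  assumes "\<And>j T T'. j \<in> set L \<Longrightarrow> R T T' \<Longrightarrow> R (f T j) (f' T' j)" "R T T'"
  shows "R (foldl f T L) (foldl f' T' L)"
  using assms by (induction L arbitrary: T T') auto

text \<open>\<open>ract\<close> only sums over the indices \<open>{1..h}\<close>, so it agrees with the corresponding swap
operator only on index assignments with values in that range.\<close>

definition index_box :: "nat \<Rightarrow> nat \<Rightarrow> (bool \<times> nat \<Rightarrow> nat) set" where
  "index_box m h = {\<kappa>. \<forall>p\<in>{1..m}. \<forall>b. \<kappa> (b, p) \<in> {1..h}}"

definition agree_on_box :: "nat \<Rightarrow> nat \<Rightarrow> 'a dten \<Rightarrow> 'a dten \<Rightarrow> bool" where
  "agree_on_box m h T T' \<longleftrightarrow> (\<forall>\<kappa>\<in>index_box m h. T \<kappa> = T' \<kappa>)"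

lemma swap_slots_index_box:
  "\<kappa> \<in> index_box m h \<Longrightarrow> p \<in> {1..m} \<Longrightarrow> q \<in> {1..m} \<Longrightarrow> swap_slots (b, p) (b', q) \<kappa> \<in> index_box m h"
  unfolding index_box_def by (auto simp: swap_slots_apply)

lemma agree_on_box_refl: "agree_on_box m h T T"
  by (simp add: agree_on_box_def)

lemma agree_on_box_swap_op:
  "p \<in> {1..m} \<Longrightarrow> q \<in> {1..m} \<Longrightarrow> agree_on_box m h T T' \<Longrightarrow>
   agree_on_box m h (swap_op sc \<alpha> \<beta> (b, p) (b', q) T) (swap_op sc \<alpha> \<beta> (b, p) (b', q) T')"
  using swap_slots_index_box unfolding swap_op_def agree_on_box_def by auto

lemma agree_on_box_bmul: "agree_on_box m h T T' \<Longrightarrow> agree_on_box m h (bmul n N s T w p) (bmul n N s T' w p)"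
  unfolding agree_on_box_def bmul_def by auto

definition Rfac_norm :: "nat \<Rightarrow> nat \<Rightarrow> complex \<Rightarrow> complex \<Rightarrow> complex \<Rightarrow> complex" where
  "Rfac_norm n N \<rho> x y = 1 / fminus (- x - \<rho>) y ^ (if hatn n N = n then 1 else 0)"

definition Rfac_op :: "(complex \<Rightarrow> 'a::ring_1) \<Rightarrow> nat \<Rightarrow> nat \<Rightarrow> complex \<Rightarrow> complex \<Rightarrow> complex \<Rightarrow>
    bool \<times> nat \<Rightarrow> bool \<times> nat \<Rightarrow> 'a dten \<Rightarrow> 'a dten" where
  "Rfac_op sc n N \<rho> x y = R_op sc (Rfac_norm n N \<rho> x y) (- x - \<rho> - y)"

lemma Rfac_op_commute: "Rfac_op sc n N \<rho> x y = Rfac_op sc n N \<rho> y x"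
proof -
  have w: "- x - \<rho> - y = - y - \<rho> - x" by simp
  have g: "Rfac_norm n N \<rho> x y = Rfac_norm n N \<rho> y x"
    unfolding Rfac_norm_def fminus_def w ..
  show ?thesis
    unfolding Rfac_op_def w g ..
qed

lemma if_one_zero_divide:
  "((if P then 1 else 0) - (if Q then 1 else 0) / w) / F
   = (if P then 1 / F else 0) + (if Q then - (1 / F) / w else (0::complex))"
  by (cases P; cases Q) (simp_all add: diff_divide_distrib)

lemma Rfac_entry: "Rfac n N \<rho> x y i i' j j'
   = (if i = i' \<and> j = j' then Rfac_norm n N \<rho> x y else 0)
   + (if i' = j \<and> j' = i then - Rfac_norm n N \<rho> x y / (- x - \<rho> - y) else 0)"
  unfolding Rfac_def Rmat_def Idmat4_def Pmat_def Rfac_norm_def if_one_zero_divide ..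

lemma Rcheck_entry:
  assumes "w \<noteq> 0" "k \<in> {1..K}" "l \<in> {1..K}"
  shows "Rcheck K w k i l j
   = (if k = i \<and> l = j then - 1 / (w - 1) else 0) + (if i = l \<and> j = k then w / (w - 1) else 0)"
proof -
  have "mprod4 K Pmat (Rmat w) k i l j = Rmat w l i k j"
    unfolding mprod4_def Pmat_def using assms
    by (simp add: mult_if_zero_left if_conj_zero sum_if_zero sum.delta cong: if_cong)
  then have "Rcheck K w k i l j = w / (w - 1) * ((if i = l \<and> j = k then 1 else 0) - (if k = i \<and> l = j then 1 else 0) / w)"
    unfolding Rcheck_def Rmat_def Idmat4_def Pmat_def by (simp add: eq_commute conj_commute)
  also have "\<dots> = (if k = i \<and> l = j then - 1 / (w - 1) else 0) + (if i = l \<and> j = k then w / (w - 1) else 0)"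
  proof -
    have "w / (w - 1) * ((if Q then 1 else 0) - (if P then 1 else 0) / w)
        = (if P then - 1 / (w - 1) else 0) + (if Q then w / (w - 1) else 0)" for P Q
      using assms(1) by (cases P; cases Q) (simp_all add: field_simps)
    then show ?thesis .
  qed
  finally show ?thesis .
qed

definition creation_step :: "(complex \<Rightarrow> 'a::ring_1) \<Rightarrow> (nat \<Rightarrow> nat \<Rightarrow> complex \<Rightarrow> 'a) \<Rightarrow>
    nat \<Rightarrow> nat \<Rightarrow> complex \<Rightarrow> nat \<Rightarrow> (nat \<Rightarrow> complex) \<Rightarrow> 'a dten \<Rightarrow> nat \<Rightarrow> 'a dten" where
  "creation_step sc s n N \<rho> m u T i =
     foldl (\<lambda>T' j. Rfac_op sc n N \<rho> (u i) (u j) (False, i) (True, j) T') (bmul n N s T (u i) i) [Suc i..<Suc m]"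

definition creation_op :: "(complex \<Rightarrow> 'a::ring_1) \<Rightarrow> (nat \<Rightarrow> nat \<Rightarrow> complex \<Rightarrow> 'a) \<Rightarrow>
    nat \<Rightarrow> nat \<Rightarrow> complex \<Rightarrow> nat \<Rightarrow> (nat \<Rightarrow> complex) \<Rightarrow> 'a dten" where
  "creation_op sc s n N \<rho> m u = foldl (creation_step sc s n N \<rho> m u) (\<lambda>\<kappa>. 1) (rev [1..<Suc m])"

context cscalar
begin

lemma ract_eq_swap_op:
  assumes "a \<noteq> c" "\<kappa> a \<in> {1..K}" "\<kappa> c \<in> {1..K}"
    and M: "\<And>x y. x \<in> {1..K} \<Longrightarrow> y \<in> {1..K} \<Longrightarrow>
       M x (\<kappa> a) y (\<kappa> c) = (if x = \<kappa> a \<and> y = \<kappa> c then \<alpha> else 0) + (if \<kappa> a = y \<and> \<kappa> c = x then \<beta> else 0)"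
  shows "ract sc K M a c T \<kappa> = swap_op sc \<alpha> \<beta> a c T \<kappa>"
proof -
  have "ract sc K M a c T \<kappa> = (\<Sum>x\<in>{1..K}. \<Sum>y\<in>{1..K}.
      (if x = \<kappa> a then if y = \<kappa> c then sc \<alpha> * T (\<kappa>(a := x, c := y)) else 0 else 0)
    + (if x = \<kappa> c then if y = \<kappa> a then sc \<beta> * T (\<kappa>(a := x, c := y)) else 0 else 0))"
    unfolding ract_def by (intro sum.cong refl) (auto simp: M sc_add sc_zero distrib_right)
  also have "\<dots> = sc \<alpha> * T (\<kappa>(a := \<kappa> a, c := \<kappa> c)) + sc \<beta> * T (\<kappa>(a := \<kappa> c, c := \<kappa> a))"
    using assms(2,3) by (simp add: sum.distrib sum_if_zero sum.delta cong: if_cong)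
  also have "\<dots> = swap_op sc \<alpha> \<beta> a c T \<kappa>"
    unfolding swap_op_def swap_slots_def using assms(1) by simp
  finally show ?thesis .
qed

lemma agree_on_box_ract_Rfac:
  assumes "p \<in> {1..m}" "j \<in> {1..m}" "agree_on_box m h T T'"
  shows "agree_on_box m h (ract sc h (Rfac n N \<rho> x y) (False, p) (True, j) T)
    (Rfac_op sc n N \<rho> x y (False, p) (True, j) T')"
  unfolding agree_on_box_def
proof
  fix \<kappa> assume \<kappa>: "\<kappa> \<in> index_box m h"
  have "ract sc h (Rfac n N \<rho> x y) (False, p) (True, j) T \<kappa> = Rfac_op sc n N \<rho> x y (False, p) (True, j) T \<kappa>"
    unfolding Rfac_op_def R_op_def
    by (rule ract_eq_swap_op) (use \<kappa> assms in \<open>auto simp: index_box_def Rfac_entry sc_zero\<close>)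
  also have "\<dots> = Rfac_op sc n N \<rho> x y (False, p) (True, j) T' \<kappa>"
    using agree_on_box_swap_op[OF assms] \<kappa> unfolding Rfac_op_def R_op_def agree_on_box_def by blast
  finally show "ract sc h (Rfac n N \<rho> x y) (False, p) (True, j) T \<kappa> = Rfac_op sc n N \<rho> x y (False, p) (True, j) T' \<kappa>" .
qed

lemma agree_on_box_ract_Rcheck:
  assumes "p \<in> {1..m}" "q \<in> {1..m}" "p \<noteq> q" "w \<noteq> 0" "agree_on_box m h T T'"
  shows "agree_on_box m h (ract sc h (Rcheck h w) (b, p) (b, q) T) (Rcheck_op sc w (b, p) (b, q) T')"
  unfolding agree_on_box_def
proof
  fix \<kappa> assume \<kappa>: "\<kappa> \<in> index_box m h"
  have "ract sc h (Rcheck h w) (b, p) (b, q) T \<kappa> = Rcheck_op sc w (b, p) (b, q) T \<kappa>"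
    unfolding Rcheck_op_def
    by (rule ract_eq_swap_op) (use \<kappa> assms in \<open>auto simp: index_box_def Rcheck_entry\<close>)
  also have "\<dots> = Rcheck_op sc w (b, p) (b, q) T' \<kappa>"
    using agree_on_box_swap_op[OF assms(1,2,5)] \<kappa> unfolding Rcheck_op_def agree_on_box_def by blast
  finally show "ract sc h (Rcheck h w) (b, p) (b, q) T \<kappa> = Rcheck_op sc w (b, p) (b, q) T' \<kappa>" .
qed

lemma agree_on_box_creation_step:
  "k \<in> {1..m} \<Longrightarrow> agree_on_box m h T T' \<Longrightarrow>
   agree_on_box m h (creation_step sc s n N \<rho> m u T k) (creation_step sc s n N \<rho> m u T' k)"
  unfolding creation_step_def Rfac_op_def R_op_def
  by (rule foldl_rel[where R="agree_on_box m h"]) (auto intro!: agree_on_box_swap_op agree_on_box_bmul)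

lemma agree_on_box_creation: "agree_on_box m (hatn n N) (creation sc s n N \<rho> m u) (creation_op sc s n N \<rho> m u)"
  unfolding creation_def creation_op_def creation_step_def
  by (intro foldl_rel[where R="agree_on_box m (hatn n N)"] agree_on_box_refl)
     (auto intro!: agree_on_box_ract_Rfac agree_on_box_bmul)

end

section \<open>Moving the exchange operator through the creation operator\<close>

lemma foldl_commute:
  assumes "\<And>j T. j \<in> set L \<Longrightarrow> g j (Q T) = Q (g' j T)"
  shows "foldl (\<lambda>T j. g j T) (Q T) L = Q (foldl (\<lambda>T j. g' j T) T L)"
  using assms by (induction L arbitrary: T) auto

lemma foldl_interleave:
  assumes "distinct L" "\<And>j j' T. j \<in> set L \<Longrightarrow> j' \<in> set L \<Longrightarrow> j \<noteq> j' \<Longrightarrow> A j (B j' T) = B j' (A j T)"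
  shows "foldl (\<lambda>T j. A j T) (foldl (\<lambda>T j. B j T) T L) L = foldl (\<lambda>T j. A j (B j T)) T L"
  using assms
proof (induction L arbitrary: T)
  case Nil
  then show ?case by simp
next
  case (Cons x L)
  have "A x (foldl (\<lambda>T j. B j T) T' L) = foldl (\<lambda>T j. B j T) (A x T') L" for T'
    using foldl_commute[of L B "A x" B T'] Cons.prems by (metis distinct.simps(2) list.set_intros(1,2))
  then show ?case
    using Cons by simp
qed

lemma upt_split_pair:
  assumes "k \<le> i" "Suc i \<le> m"
  shows "[k..<Suc m] = [k..<i] @ [i, Suc i] @ [Suc (Suc i)..<Suc m]"
proof -
  have "[k..<Suc m] = [k..<i] @ [i..<Suc m]"
    using upt_add_eq_append[of k i "Suc m - i"] assms by simp
  also have "[i..<Suc m] = i # Suc i # [Suc (Suc i)..<Suc m]"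
    using assms by (simp add: upt_conv_Cons)
  finally show ?thesis by simp
qed

lemma rev_upt_split:
  assumes "1 \<le> i" "i < m"
  shows "rev [1..<Suc m] = rev [Suc (Suc i)..<Suc m] @ [Suc i, i] @ rev [1..<i]"
  using upt_split_pair[of 1 i m] assms by simp

definition indep_slots :: "(bool \<times> nat) set \<Rightarrow> 'a dten \<Rightarrow> bool" where
  "indep_slots S T \<longleftrightarrow> (\<forall>\<kappa> z v. z \<in> S \<longrightarrow> T (\<kappa>(z := v)) = T \<kappa>)"

lemma indep_slots_bmul:
  "indep_slots S T \<Longrightarrow> (False, p) \<notin> S \<Longrightarrow> (True, p) \<notin> S \<Longrightarrow> indep_slots S (bmul n N s T w p)"
  unfolding indep_slots_def bmul_def by auto

lemma indep_slots_swap_op: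
  assumes "indep_slots S T" "a \<notin> S" "c \<notin> S"
  shows "indep_slots S (swap_op sc \<alpha> \<beta> a c T)"
proof -
  have "swap_slots a c (\<kappa>(z := v)) = (swap_slots a c \<kappa>)(z := v)" if "z \<in> S" for \<kappa> z v
    using assms that by (auto simp: swap_slots_def fun_eq_iff)
  then show ?thesis
    using assms(1) unfolding indep_slots_def swap_op_def by simp
qed

lemma indep_slots_swap_slots: "indep_slots S T \<Longrightarrow> a \<in> S \<Longrightarrow> c \<in> S \<Longrightarrow> T (swap_slots a c \<kappa>) = T \<kappa>"
  unfolding indep_slots_def swap_slots_def by metis

lemma indep_slots_creation_steps:
  assumes "indep_slots S T" "\<forall>k\<in>set L. \<forall>x\<in>S. snd x < k"
  shows "indep_slots S (foldl (creation_step sc s n N \<rho> m u) T L)"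
  using assms
proof (induction L arbitrary: T)
  case Nil
  then show ?case by simp
next
  case (Cons k L)
  have "indep_slots S (creation_step sc s n N \<rho> m u T k)"
    unfolding creation_step_def Rfac_op_def R_op_def
    by (rule foldl_rel[where R="\<lambda>T T'. indep_slots S T"])
       (use Cons.prems in \<open>fastforce intro!: indep_slots_swap_op indep_slots_bmul\<close>)+
  then show ?case
    using Cons by simp
qed

definition exchange_op :: "(complex \<Rightarrow> 'a::ring_1) \<Rightarrow> (nat \<Rightarrow> complex) \<Rightarrow> nat \<Rightarrow> 'a dten \<Rightarrow> 'a dten" where
  "exchange_op sc u i T = Rcheck_op sc (u (Suc i) - u i) (True, Suc i) (True, i)
      (Rcheck_op sc (u i - u (Suc i)) (False, Suc i) (False, i) T)"

context cscalar
begin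

lemma bmul_swap_op:
  "(False, p) \<notin> {a, c} \<Longrightarrow> (True, p) \<notin> {a, c} \<Longrightarrow>
   bmul n N s (swap_op sc \<alpha> \<beta> a c T) w p = swap_op sc \<alpha> \<beta> a c (bmul n N s T w p)"
  unfolding bmul_def swap_op_def by (rule ext) (simp add: swap_slots_apply distrib_right mult.assoc)

lemma exchange_op_alt: "exchange_op sc u i T = Rcheck_op sc (u i - u (Suc i)) (False, Suc i) (False, i)
    (Rcheck_op sc (u (Suc i) - u i) (True, Suc i) (True, i) T)"
  unfolding exchange_op_def Rcheck_op_def by (rule swap_op_commute) auto

lemma bmul_exchange_op:
  "k \<noteq> i \<Longrightarrow> k \<noteq> Suc i \<Longrightarrow> bmul n N s (exchange_op sc u i T) w k = exchange_op sc u i (bmul n N s T w k)"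
  unfolding exchange_op_def Rcheck_op_def by (simp add: bmul_swap_op)

lemma swap_op_exchange_op:
  assumes "a \<notin> {(True, i), (True, Suc i), (False, i), (False, Suc i)}"
    "c \<notin> {(True, i), (True, Suc i), (False, i), (False, Suc i)}"
  shows "swap_op sc \<alpha> \<beta> a c (exchange_op sc u i T) = exchange_op sc u i (swap_op sc \<alpha> \<beta> a c T)"
  unfolding exchange_op_def Rcheck_op_def using assms
  by (simp add: swap_op_commute[where a=a and c=c and a'="(True, Suc i)" and c'="(True, i)"]
      swap_op_commute[where a=a and c=c and a'="(False, Suc i)" and c'="(False, i)"])

lemma creation_step_exchange_op:
  assumes k: "1 \<le> k" "k < i" and "Suc i \<le> m"
    and generic: "- u k - \<rho> - u (Suc i) \<noteq> 0" "- u k - \<rho> - u i \<noteq> 0" "u (Suc i) - u i \<noteq> 1"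
  shows "creation_step sc s n N \<rho> m u (exchange_op sc u i T) k
    = exchange_op sc u i (creation_step sc s n N \<rho> m (u(i := u (Suc i), Suc i := u i)) T k)"
proof -
  have "Suc k \<le> i"
    using k by simp
  let ?u' = "u(i := u (Suc i), Suc i := u i)"
  let ?R = "\<lambda>v j T. Rfac_op sc n N \<rho> (u k) (v j) (False, k) (True, j) T"
  have outside: "foldl (\<lambda>T j. ?R u j T) (exchange_op sc u i T0) L = exchange_op sc u i (foldl (\<lambda>T j. ?R ?u' j T) T0 L)"
    if "set L \<subseteq> - {i, Suc i}" for L T0
    by (rule foldl_commute[where g="?R u" and g'="?R ?u'"]) (use that k in \<open>auto simp: Rfac_op_def R_op_def intro!: swap_op_exchange_op\<close>)
  have u': "?u' k = u k" "?u' i = u (Suc i)" "?u' (Suc i) = u i"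
    using k by simp_all
  have middle: "?R u (Suc i) (?R u i (exchange_op sc u i T0)) = exchange_op sc u i (?R ?u' (Suc i) (?R ?u' i T0))" for T0
  proof -
    let ?F = "Rcheck_op sc (u i - u (Suc i)) (False, Suc i) (False, i)"
    let ?T = "Rcheck_op sc (u (Suc i) - u i) (True, i) (True, Suc i)"
    have "Rfac_op sc n N \<rho> x y (False, k) (True, j) (?F X) = ?F (Rfac_op sc n N \<rho> x y (False, k) (True, j) X)" for x y j X
      unfolding Rfac_op_def R_op_def Rcheck_op_def using k by (intro swap_op_commute) auto
    moreover have "?R u (Suc i) (?R u i (?T X)) = ?T (?R ?u' (Suc i) (?R ?u' i X))" for X
    proof -
      have "u (Suc i) - u i = (- u k - \<rho> - u i) - (- u k - \<rho> - u (Suc i))"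
        by simp
      then show ?thesis
        unfolding Rfac_op_def u' by (simp only:) (rule yang_baxter_Rcheck_first, use k generic in auto)
    qed
    ultimately show ?thesis
      unfolding exchange_op_alt Rcheck_op_commute_slots[of _ _ "(True, Suc i)"] by (simp only:)
  qed
  have "bmul n N s (exchange_op sc u i T) (u k) k = exchange_op sc u i (bmul n N s T (u k) k)"
    using k by (simp add: bmul_exchange_op)
  moreover have "set [Suc k..<i] \<subseteq> - {i, Suc i}" "set [Suc (Suc i)..<Suc m] \<subseteq> - {i, Suc i}"
    by auto
  ultimately show ?thesis
    unfolding creation_step_def upt_split_pair[OF \<open>Suc k \<le> i\<close> assms(3)] foldl_append foldl_Cons foldl_Nil u'(1)
    by (simp only: outside middle)
qed

text \<open>With \<open>P\<close> the flip of the \<open>True\<close>-slots, \<open>eq1\<close> and its \<open>P\<close>-translate \<open>eq2\<close> determine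
\<open>(1 - P/a) C\<close>; for \<open>a \<noteq> \<plusminus>1\<close> the operator \<open>1 - P/a\<close> is invertible, with inverse
\<open>(a\<^sup>2 + a P)/(a\<^sup>2 - 1)\<close>.\<close>

lemma solve_exchange_system:
  fixes C0 C1 D0 D1 D2 D3 :: 'a
  assumes a: "a \<notin> {0, 1, -1}"
    and eq1: "C0 - sc (1/a) * C1 = D3 - sc (1/a) * D2"
    and eq2: "C1 - sc (1/a) * C0 = D1 - sc (1/a) * D0"
  shows "C0 = sc (-1/(-a-1)) * (sc (-1/(a-1)) * D0 + sc (a/(a-1)) * D1)
            + sc (-a/(-a-1)) * (sc (-1/(a-1)) * D2 + sc (a/(a-1)) * D3)"
proof -
  define A where "A = a * a / (a * a - 1)"
  define B where "B = a / (a * a - 1)"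
  have "a * a - 1 \<noteq> 0"
  proof
    assume "a * a - 1 = 0"
    then have "(a - 1) * (a + 1) = 0" by (simp add: algebra_simps)
    then show False using a by (simp add: eq_neg_iff_add_eq_0[symmetric])
  qed
  moreover have "B * (1/a) = 1 / (a * a - 1)" "A * (1/a) = a / (a * a - 1)"
    using a by (simp_all add: A_def B_def)
  ultimately have coeffs: "A - B * (1/a) = 1" "B - A * (1/a) = 0"
    "-1/(-a-1) * (-1/(a-1)) = - (B * (1/a))" "-1/(-a-1) * (a/(a-1)) = B"
    "-a/(-a-1) * (-1/(a-1)) = - (A * (1/a))" "-a/(-a-1) * (a/(a-1)) = A"
    using a by (simp_all add: A_def B_def diff_divide_distrib[symmetric] field_simps)
  have "C0 = sc (A - B * (1/a)) * C0 + sc (B - A * (1/a)) * C1"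
    unfolding coeffs by (simp add: sc_one sc_zero)
  also have "\<dots> = sc A * (C0 - sc (1/a) * C1) + sc B * (C1 - sc (1/a) * C0)"
    by (simp add: sc_diff sc_merge algebra_simps)
  also have "\<dots> = sc A * (D3 - sc (1/a) * D2) + sc B * (D1 - sc (1/a) * D0)"
    unfolding eq1 eq2 ..
  also have "\<dots> = sc (-1/(-a-1) * (-1/(a-1))) * D0 + sc (-1/(-a-1) * (a/(a-1))) * D1
      + sc (-a/(-a-1) * (-1/(a-1))) * D2 + sc (-a/(-a-1) * (a/(a-1))) * D3"
    unfolding coeffs sc_minus sc_mult by (simp add: algebra_simps)
  also have "\<dots> = sc (-1/(-a-1)) * (sc (-1/(a-1)) * D0 + sc (a/(a-1)) * D1)
      + sc (-a/(-a-1)) * (sc (-1/(a-1)) * D2 + sc (a/(a-1)) * D3)"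
    by (simp only: sc_mult distrib_left mult.assoc add.assoc)
  finally show ?thesis .
qed

lemma b_pair_exchange_relation:
  assumes rel: "ty_rel1 sc s n N orth \<rho> (u i) (u (Suc i))" and half: "orth \<or> hatn n N = n"
    and \<kappa>: "\<And>b p. p \<in> {i, Suc i} \<Longrightarrow> \<kappa> (b, p) \<in> {1..hatn n N}"
    and indep: "indep_slots {(False, i), (True, i), (False, Suc i), (True, Suc i)} X"
  defines "C \<equiv> Rfac_op sc n N \<rho> (u i) (u (Suc i)) (False, i) (True, Suc i)
      (bmul n N s (bmul n N s X (u (Suc i)) (Suc i)) (u i) i)"
    and "D \<equiv> Rfac_op sc n N \<rho> (u i) (u (Suc i)) (False, i) (True, Suc i)
      (bmul n N s (bmul n N s X (u i) (Suc i)) (u (Suc i)) i)"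
    and "sT \<equiv> swap_slots (True, Suc i) (True, i)" and "sF \<equiv> swap_slots (False, Suc i) (False, i)"
    and "a \<equiv> u i - u (Suc i)"
  shows "C \<kappa> - sc (1/a) * C (sT \<kappa>) = D (sF (sT \<kappa>)) - sc (1/a) * D (sT \<kappa>)"
proof -
  have X_swap: "X (swap_slots p q \<kappa>') = X \<kappa>'"
    if "p \<in> {(False, i), (True, i), (False, Suc i), (True, Suc i)}"
      "q \<in> {(False, i), (True, i), (False, Suc i), (True, Suc i)}" for p q \<kappa>'
    by (rule indep_slots_swap_slots[OF indep that])
  have "- u (Suc i) - \<rho> - u i = - u i - \<rho> - u (Suc i)"
    by simp
  note exchange = b_coeff_exchange[OF rel half \<kappa> \<kappa> \<kappa> \<kappa>, unfolded this]
  show ?thesis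
    using arg_cong[OF exchange, where f="\<lambda>Y. sc (Rfac_norm n N \<rho> (u i) (u (Suc i))) * (X \<kappa> * Y)"]
    unfolding C_def D_def sT_def sF_def a_def Rfac_op_def R_op_def swap_op_def bmul_b_coeff
    by (simp add: swap_slots_apply X_swap sc_normalize algebra_simps)
qed

lemma exchange_op_b_pair:
  assumes rel: "ty_rel1 sc s n N orth \<rho> (u i) (u (Suc i))" and half: "orth \<or> hatn n N = n"
    and i: "1 \<le> i" "Suc i \<le> m"
    and indep: "indep_slots {(False, i), (True, i), (False, Suc i), (True, Suc i)} X"
    and a: "u i - u (Suc i) \<notin> {0, 1, -1}"
  shows "agree_on_box m (hatn n N)
     (Rfac_op sc n N \<rho> (u i) (u (Suc i)) (False, i) (True, Suc i)
        (bmul n N s (bmul n N s X (u (Suc i)) (Suc i)) (u i) i))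
     (exchange_op sc u i (Rfac_op sc n N \<rho> (u i) (u (Suc i)) (False, i) (True, Suc i)
        (bmul n N s (bmul n N s X (u i) (Suc i)) (u (Suc i)) i)))"
    (is "agree_on_box m (hatn n N) ?C (exchange_op sc u i ?D)")
  unfolding agree_on_box_def
proof
  fix \<kappa> assume \<kappa>: "\<kappa> \<in> index_box m (hatn n N)"
  define sT where "sT = swap_slots (True, Suc i) (True, i)"
  define sF where "sF = swap_slots (False, Suc i) (False, i)"
  define a' where "a' = u i - u (Suc i)"
  have relation: "?C \<kappa>' - sc (1/a') * ?C (sT \<kappa>') = ?D (sF (sT \<kappa>')) - sc (1/a') * ?D (sT \<kappa>')"
    if "\<kappa>' \<in> index_box m (hatn n N)" for \<kappa>'
    unfolding sT_def sF_def a'_def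
    by (rule b_pair_exchange_relation[OF rel half _ indep]) (use that i in \<open>auto simp: index_box_def\<close>)
  have "sT \<kappa> \<in> index_box m (hatn n N)"
    unfolding sT_def by (rule swap_slots_index_box[OF \<kappa>]) (use i in auto)
  from relation[OF this] have eq2: "?C (sT \<kappa>) - sc (1/a') * ?C \<kappa> = ?D (sF \<kappa>) - sc (1/a') * ?D \<kappa>"
    unfolding sT_def sF_def by simp
  have "?C \<kappa> = sc (-1/(-a'-1)) * (sc (-1/(a'-1)) * ?D \<kappa> + sc (a'/(a'-1)) * ?D (sF \<kappa>))
      + sc (-a'/(-a'-1)) * (sc (-1/(a'-1)) * ?D (sT \<kappa>) + sc (a'/(a'-1)) * ?D (sF (sT \<kappa>)))"
    by (rule solve_exchange_system[OF _ relation[OF \<kappa>] eq2]) (use a in \<open>simp add: a'_def\<close>)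
  also have "\<dots> = exchange_op sc u i ?D \<kappa>"
  proof -
    have "u (Suc i) - u i = - a'" unfolding a'_def by simp
    then show ?thesis
      unfolding exchange_op_def Rcheck_op_def swap_op_def a'_def[symmetric] sT_def sF_def by simp
  qed
  finally show "?C \<kappa> = exchange_op sc u i ?D \<kappa>" .
qed

lemma creation_step_pair:
  assumes "Suc i \<le> m"
  shows "creation_step sc s n N \<rho> m v (creation_step sc s n N \<rho> m v X (Suc i)) i =
    foldl (\<lambda>T j. Rfac_op sc n N \<rho> (v i) (v j) (False, i) (True, j)
                  (Rfac_op sc n N \<rho> (v (Suc i)) (v j) (False, Suc i) (True, j) T))
      (Rfac_op sc n N \<rho> (v i) (v (Suc i)) (False, i) (True, Suc i)
         (bmul n N s (bmul n N s X (v (Suc i)) (Suc i)) (v i) i))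
      [Suc (Suc i)..<Suc m]"
proof -
  let ?L = "[Suc (Suc i)..<Suc m]"
  let ?A = "\<lambda>j T. Rfac_op sc n N \<rho> (v i) (v j) (False, i) (True, j) T"
  let ?B = "\<lambda>j T. Rfac_op sc n N \<rho> (v (Suc i)) (v j) (False, Suc i) (True, j) T"
  have upt: "[Suc i..<Suc m] = Suc i # ?L"
    using assms by (simp add: upt_conv_Cons)
  have "bmul n N s (foldl (\<lambda>T j. ?B j T) Z ?L) (v i) i = foldl (\<lambda>T j. ?B j T) (bmul n N s Z (v i) i) ?L" for Z
    by (rule foldl_commute[where Q="\<lambda>T. bmul n N s T (v i) i", symmetric])
       (auto simp: Rfac_op_def R_op_def bmul_swap_op)
  moreover have "?A (Suc i) (foldl (\<lambda>T j. ?B j T) Z ?L) = foldl (\<lambda>T j. ?B j T) (?A (Suc i) Z) ?L" for Z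
    by (rule foldl_commute[where Q="?A (Suc i)", symmetric])
       (auto simp: Rfac_op_def R_op_def intro!: swap_op_commute)
  ultimately have "creation_step sc s n N \<rho> m v (creation_step sc s n N \<rho> m v X (Suc i)) i =
     foldl (\<lambda>T j. ?A j T) (foldl (\<lambda>T j. ?B j T)
       (?A (Suc i) (bmul n N s (bmul n N s X (v (Suc i)) (Suc i)) (v i) i)) ?L) ?L"
    unfolding creation_step_def upt by (simp only: foldl_Cons)
  also have "\<dots> = foldl (\<lambda>T j. ?A j (?B j T))
      (?A (Suc i) (bmul n N s (bmul n N s X (v (Suc i)) (Suc i)) (v i) i)) ?L"
    by (rule foldl_interleave) (auto simp: Rfac_op_def R_op_def intro!: swap_op_commute)
  finally show ?thesis .
qed

lemma Rfac_op_pair_exchange_op: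
  assumes j: "Suc (Suc i) \<le> j"
    and generic: "- u (Suc i) - \<rho> - u j \<noteq> 0" "- u i - \<rho> - u j \<noteq> 0" "u i - u (Suc i) \<noteq> 1"
  shows "Rfac_op sc n N \<rho> (u i) (u j) (False, i) (True, j)
      (Rfac_op sc n N \<rho> (u (Suc i)) (u j) (False, Suc i) (True, j) (exchange_op sc u i T))
    = exchange_op sc u i (Rfac_op sc n N \<rho> (u (Suc i)) (u j) (False, i) (True, j)
      (Rfac_op sc n N \<rho> (u i) (u j) (False, Suc i) (True, j) T))"
proof -
  let ?F = "Rcheck_op sc (u i - u (Suc i)) (False, i) (False, Suc i)"
  let ?T = "Rcheck_op sc (u (Suc i) - u i) (True, Suc i) (True, i)"
  have "Rfac_op sc n N \<rho> x y (False, p) (True, j) (?T X) = ?T (Rfac_op sc n N \<rho> x y (False, p) (True, j) X)" for x y p X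
    unfolding Rfac_op_def R_op_def Rcheck_op_def using j by (intro swap_op_commute) auto
  moreover have "?F (Rfac_op sc n N \<rho> (u (Suc i)) (u j) (False, i) (True, j)
        (Rfac_op sc n N \<rho> (u i) (u j) (False, Suc i) (True, j) X))
     = Rfac_op sc n N \<rho> (u i) (u j) (False, i) (True, j)
        (Rfac_op sc n N \<rho> (u (Suc i)) (u j) (False, Suc i) (True, j) (?F X))" for X
  proof -
    have "u i - u (Suc i) = (- u (Suc i) - \<rho> - u j) - (- u i - \<rho> - u j)"
      by simp
    then show ?thesis
      unfolding Rfac_op_def by (simp only:) (rule yang_baxter_Rcheck_last, use j generic in auto)
  qed
  ultimately show ?thesis
    unfolding exchange_op_def Rcheck_op_commute_slots[of _ _ "(False, Suc i)"] by (simp only:)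
qed

lemma creation_step_pair_exchange:
  assumes rel: "ty_rel1 sc s n N orth \<rho> (u i) (u (Suc i))" and half: "orth \<or> hatn n N = n"
    and i: "1 \<le> i" "Suc i \<le> m"
    and indep: "indep_slots {(False, i), (True, i), (False, Suc i), (True, Suc i)} X"
    and generic: "\<And>j. Suc (Suc i) \<le> j \<Longrightarrow> j \<le> m \<Longrightarrow> - u i - \<rho> - u j \<noteq> 0 \<and> - u (Suc i) - \<rho> - u j \<noteq> 0"
    and a: "u i - u (Suc i) \<notin> {0, 1, -1}"
  defines "u' \<equiv> u(i := u (Suc i), Suc i := u i)"
  shows "agree_on_box m (hatn n N)
      (creation_step sc s n N \<rho> m u (creation_step sc s n N \<rho> m u X (Suc i)) i)
      (exchange_op sc u i (creation_step sc s n N \<rho> m u' (creation_step sc s n N \<rho> m u' X (Suc i)) i))"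
proof -
  let ?L = "[Suc (Suc i)..<Suc m]"
  let ?R = "\<lambda>x y p. Rfac_op sc n N \<rho> x y (False, p)"
  define core where "core = ?R (u i) (u (Suc i)) i (True, Suc i) (bmul n N s (bmul n N s X (u (Suc i)) (Suc i)) (u i) i)"
  define core' where "core' = ?R (u i) (u (Suc i)) i (True, Suc i) (bmul n N s (bmul n N s X (u i) (Suc i)) (u (Suc i)) i)"
  have lhs: "creation_step sc s n N \<rho> m u (creation_step sc s n N \<rho> m u X (Suc i)) i
      = foldl (\<lambda>T j. ?R (u i) (u j) i (True, j) (?R (u (Suc i)) (u j) (Suc i) (True, j) T)) core ?L"
    unfolding creation_step_pair[OF i(2)] core_def ..
  have "creation_step sc s n N \<rho> m u' (creation_step sc s n N \<rho> m u' X (Suc i)) i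
      = foldl (\<lambda>T j. ?R (u (Suc i)) (u j) i (True, j) (?R (u i) (u j) (Suc i) (True, j) T)) core' ?L"
    unfolding creation_step_pair[OF i(2)] core'_def u'_def
    by (intro foldl_cong) (auto simp: Rfac_op_commute[of _ _ _ _ "u (Suc i)" "u i"])
  then have rhs: "exchange_op sc u i (creation_step sc s n N \<rho> m u' (creation_step sc s n N \<rho> m u' X (Suc i)) i)
      = foldl (\<lambda>T j. ?R (u i) (u j) i (True, j) (?R (u (Suc i)) (u j) (Suc i) (True, j) T)) (exchange_op sc u i core') ?L"
    by (simp only:) (rule foldl_commute[where Q="exchange_op sc u i", symmetric],
        use generic a in \<open>auto intro!: Rfac_op_pair_exchange_op\<close>)
  have "agree_on_box m (hatn n N) core (exchange_op sc u i core')"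
    unfolding core_def core'_def by (rule exchange_op_b_pair[OF rel half i indep a])
  then show ?thesis
    unfolding lhs rhs using i
    by (intro foldl_rel[where R="agree_on_box m (hatn n N)"])
       (auto simp: Rfac_op_def R_op_def intro!: agree_on_box_swap_op)
qed

lemma creation_op_exchange:
  assumes rel: "ty_rel1 sc s n N orth \<rho> (u i) (u (Suc i))" and half: "orth \<or> hatn n N = n"
    and i: "1 \<le> i" "i < m"
    and generic: "\<And>p q. p \<in> {1..m} \<Longrightarrow> q \<in> {1..m} \<Longrightarrow> p \<noteq> q \<Longrightarrow> - u p - \<rho> - u q \<noteq> 0"
    and a: "u i - u (Suc i) \<notin> {0, 1, -1}"
  defines "u' \<equiv> u(i := u (Suc i), Suc i := u i)"
  shows "agree_on_box m (hatn n N) (creation_op sc s n N \<rho> m u) (exchange_op sc u i (creation_op sc s n N \<rho> m u'))"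
proof -
  let ?step = "creation_step sc s n N \<rho> m"
  define X where "X = foldl (?step u) (\<lambda>\<kappa>. 1) (rev [Suc (Suc i)..<Suc m])"
  have "?step u' T k = ?step u T k" if "Suc (Suc i) \<le> k" for T k
    unfolding creation_step_def u'_def using that by (intro foldl_cong) auto
  then have X': "foldl (?step u') (\<lambda>\<kappa>. 1) (rev [Suc (Suc i)..<Suc m]) = X"
    unfolding X_def by (intro foldl_cong) auto
  have "indep_slots {(False, i), (True, i), (False, Suc i), (True, Suc i)} X"
    unfolding X_def by (rule indep_slots_creation_steps) (auto simp: indep_slots_def)
  then have pair: "agree_on_box m (hatn n N) (?step u (?step u X (Suc i)) i)
      (exchange_op sc u i (?step u' (?step u' X (Suc i)) i))"
    unfolding u'_def using i a generic[of i] generic[of "Suc i"]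
    by (intro creation_step_pair_exchange[OF rel half]) auto
  from a have "u (Suc i) - u i \<noteq> 1"
    by (metis insert_iff minus_diff_eq)
  have outer: "foldl (?step u) (exchange_op sc u i T) (rev [1..<i])
      = exchange_op sc u i (foldl (?step u') T (rev [1..<i]))" for T
  proof (rule foldl_commute[where g="\<lambda>k T. ?step u T k" and g'="\<lambda>k T. ?step u' T k"])
    fix k T' assume "k \<in> set (rev [1..<i])"
    then show "?step u (exchange_op sc u i T') k = exchange_op sc u i (?step u' T' k)"
      unfolding u'_def using i \<open>u (Suc i) - u i \<noteq> 1\<close> generic[of k i] generic[of k "Suc i"]
      by (intro creation_step_exchange_op) auto
  qed
  show ?thesis
    unfolding creation_op_def rev_upt_split[OF i] foldl_append X_def[symmetric] X' foldl_Cons foldl_Nil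
      outer[symmetric]
    by (rule foldl_rel[where R="agree_on_box m (hatn n N)", OF _ pair])
       (use i in \<open>auto intro!: agree_on_box_creation_step\<close>)
qed

lemma creation_exchange:
  assumes rel: "ty_rel1 sc s n N orth \<rho> (u i) (u (Suc i))" and half: "orth \<or> hatn n N = n"
    and i: "1 \<le> i" "i < m"
    and generic: "\<And>p q. p \<in> {1..m} \<Longrightarrow> q \<in> {1..m} \<Longrightarrow> p \<noteq> q \<Longrightarrow> u p + u q \<noteq> - \<rho>"
    and a: "u i - u (Suc i) \<notin> {0, 1, -1}"
    and \<kappa>: "\<kappa> \<in> index_box m (hatn n N)"
  shows "creation sc s n N \<rho> m u \<kappa> =
    ract sc (hatn n N) (Rcheck (hatn n N) (u (Suc i) - u i)) (True, Suc i) (True, i)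
      (ract sc (hatn n N) (Rcheck (hatn n N) (u i - u (Suc i))) (False, Suc i) (False, i)
        (creation sc s n N \<rho> m (u(i := u (Suc i), Suc i := u i)))) \<kappa>"
proof -
  let ?u' = "u(i := u (Suc i), Suc i := u i)"
  have "agree_on_box m (hatn n N)
      (ract sc (hatn n N) (Rcheck (hatn n N) (u (Suc i) - u i)) (True, Suc i) (True, i)
        (ract sc (hatn n N) (Rcheck (hatn n N) (u i - u (Suc i))) (False, Suc i) (False, i)
          (creation sc s n N \<rho> m ?u')))
      (exchange_op sc u i (creation_op sc s n N \<rho> m ?u'))"
    unfolding exchange_op_def using i a
    by (intro agree_on_box_ract_Rcheck agree_on_box_creation) (auto simp: right_minus_eq)
  moreover have "- u p - \<rho> - u q \<noteq> 0" if "p \<in> {1..m}" "q \<in> {1..m}" "p \<noteq> q" for p q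
  proof
    assume "- u p - \<rho> - u q = 0"
    moreover have "u p + u q = - \<rho> - (- u p - \<rho> - u q)"
      by (simp add: algebra_simps)
    ultimately show False
      using generic[OF that] by simp
  qed
  ultimately show ?thesis
    using agree_on_box_creation[of m n N s \<rho> u] creation_op_exchange[OF rel half i _ a] \<kappa>
    unfolding agree_on_box_def by auto
qed

end

theorem mainTheorem1:
  fixes sc :: "complex \<Rightarrow> 'a::ring_1"
    and s :: "nat \<Rightarrow> nat \<Rightarrow> complex \<Rightarrow> 'a"
    and n N m i :: nat and orth :: bool and \<rho> :: complex
  assumes "n \<ge> 1" and "N = 2 * n \<or> N = 2 * n + 1" and "\<not> orth \<longrightarrow> N = 2 * n"
    and "is_cscalar sc"
    and "tw_yangian_rep sc s n N orth \<rho>"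
    and "m \<ge> 2" and "1 \<le> i" and "i < m"
  shows "\<exists>E. finite E \<and>
    (\<forall>u :: nat \<Rightarrow> complex.
       (\<forall>p\<in>{1..m}. u p \<notin> E) \<longrightarrow>
       (\<forall>p\<in>{1..m}. \<forall>q\<in>{1..m}. p \<noteq> q \<longrightarrow> u p - u q \<notin> E \<and> u p + u q \<notin> E) \<longrightarrow>
       (\<forall>\<kappa>. (\<forall>p\<in>{1..m}. \<forall>b. \<kappa> (b, p) \<in> {1..hatn n N}) \<longrightarrow>
          creation sc s n N \<rho> m u \<kappa> =
          ract sc (hatn n N) (Rcheck (hatn n N) (u (i + 1) - u i)) (True, i + 1) (True, i)
            (ract sc (hatn n N) (Rcheck (hatn n N) (u i - u (i + 1))) (False, i + 1) (False, i)
               (creation sc s n N \<rho> m (u(i := u (i + 1), i + 1 := u i)))) \<kappa>))"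
proof -
  interpret cscalar sc
    using assms(4) by unfold_locales
  obtain E0 where "finite E0" and rep: "\<And>u v. u \<notin> E0 \<Longrightarrow> v \<notin> E0 \<Longrightarrow> u - v \<notin> E0 \<Longrightarrow> u + v \<notin> E0 \<Longrightarrow>
      ty_rel1 sc s n N orth \<rho> u v"
    using assms(5) unfolding tw_yangian_rep_def by blast
  have half: "orth \<or> hatn n N = n"
    using assms(2,3) by (auto simp: hatn_def)
  show ?thesis
    unfolding Suc_eq_plus1[symmetric]
    by (intro exI[of _ "E0 \<union> {0, 1, -1, -\<rho>}"] conjI allI impI creation_exchange[OF rep half])
       (use \<open>finite E0\<close> assms(7,8) in \<open>auto simp: index_box_def\<close>)
qed

end
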